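(* Let $\mathbf w=(w_n)_{n\ge1}$ be a weight sequence such that there exists $C>0$ with $w_{mn}\le Cw_mw_n$ for all $m,n\in\mathbb N$. Then for every $p\ge1$ and all $\alpha,\beta\in\ell_{\mathbf w,p}$, $$\|\alpha\otimes\beta\|_{\mathbf w,p}\le C^{1/p}\|\alpha\|_{\mathbf w,p}\|\beta\|_{\mathbf w,p}.$$ In particular, $\ell_{\mathbf w,p}$ is a stable Calkin space.
   Context: A weight sequence is a non-increasing sequence $\mathbf w$ of positive numbers with $w_1=1$, $w_n\to0$ and $\sum_nw_n=\infty$. For $1\le p<\infty$, the Lorentz sequence space $\ell_{\mathbf w,p}$ is the space of complex sequences $\alpha$ with $\|\alpha\|_{\mathbf w,p}=\sup_\pi(\sum_n w_n|\alpha_{\pi(n)}|^p)^{1/p}<\infty$, sup over permutations $\pi$ of $\mathbb N$ (equivalently $(\sum_nw_n(\alpha^\star_n)^p)^{1/p}$, with $\alpha^\star$ the non-increasing rearrangement of $(|\alpha_n|)$). For null sequences $\alpha,\beta$, $\alpha\otimes\beta$ is the non-increasing rearrangement with multiplicities of $(|\alpha_i\beta_j|)_{i,j}$. A Calkin space is a linear subspace $\mathfrak i$ of the null sequences $c_0$ such that $\alpha\in\mathfrak i,\beta\in c_0,\beta^\star\le\alpha^\star$ imply $\beta\in\mathfrak i$; it is stable if the smallest Calkin space containing all $\alpha\otimes\beta$, $\alpha,\beta\in\mathfrak i$, equals $\mathfrak i$. *)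

theory Defs
  imports "HOL-Analysis.Analysis"
begin

text \<open>Weights are indexed from 1 (the value w 0 is irrelevant); sequences
  of numbers are indexed from 0, so the n-th term (1-based) of alpha is alpha (n-1).\<close>

definition weight_seq :: "(nat \<Rightarrow> real) \<Rightarrow> bool" where
  "weight_seq w \<longleftrightarrow> w 1 = 1 \<and> (\<forall>n\<ge>1. 0 < w n) \<and> (\<forall>n\<ge>1. w (Suc n) \<le> w n)
     \<and> (\<lambda>n. w (Suc n)) \<longlonglongrightarrow> 0 \<and> \<not> summable (\<lambda>n. w (Suc n))"

definition lorentz_pow :: "(nat \<Rightarrow> real) \<Rightarrow> real \<Rightarrow> (nat \<Rightarrow> complex) \<Rightarrow> ennreal" where
  "lorentz_pow w p \<alpha> =
     (SUP \<pi> \<in> {\<pi> :: nat \<Rightarrow> nat. bij \<pi>}. \<Sum>n. ennreal (w (Suc n) * norm (\<alpha> (\<pi> n)) powr p))"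

definition lorentz_space :: "(nat \<Rightarrow> real) \<Rightarrow> real \<Rightarrow> (nat \<Rightarrow> complex) set" where
  "lorentz_space w p = {\<alpha>. lorentz_pow w p \<alpha> < \<infinity>}"

definition lorentz_norm :: "(nat \<Rightarrow> real) \<Rightarrow> real \<Rightarrow> (nat \<Rightarrow> complex) \<Rightarrow> real" where
  "lorentz_norm w p \<alpha> = enn2real (lorentz_pow w p \<alpha>) powr (1 / p)"

text \<open>Non-increasing rearrangement (with multiplicities) of a nonnegative null family,
  0-indexed: f*(n) = inf { t \<ge> 0 : #{i. f i > t} \<le> n }.\<close>
definition decr_rearr :: "('i \<Rightarrow> real) \<Rightarrow> nat \<Rightarrow> real" where
  "decr_rearr f n = Inf {t. 0 \<le> t \<and> finite {i. t < f i} \<and> card {i. t < f i} \<le> n}"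

definition null_seqs :: "(nat \<Rightarrow> complex) set" where
  "null_seqs = {\<alpha>. \<alpha> \<longlonglongrightarrow> 0}"

definition star :: "(nat \<Rightarrow> complex) \<Rightarrow> nat \<Rightarrow> real" where
  "star \<alpha> = decr_rearr (\<lambda>n. norm (\<alpha> n))"

definition tensor :: "(nat \<Rightarrow> complex) \<Rightarrow> (nat \<Rightarrow> complex) \<Rightarrow> nat \<Rightarrow> complex" where
  "tensor \<alpha> \<beta> = (\<lambda>n. complex_of_real (decr_rearr (\<lambda>(i, j). norm (\<alpha> i) * norm (\<beta> j)) n))"

definition calkin_space :: "(nat \<Rightarrow> complex) set \<Rightarrow> bool" where
  "calkin_space I \<longleftrightarrow> I \<subseteq> null_seqs \<and> (\<lambda>n. 0) \<in> I
     \<and> (\<forall>\<alpha>\<in>I. \<forall>\<beta>\<in>I. (\<lambda>n. \<alpha> n + \<beta> n) \<in> I)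
     \<and> (\<forall>c. \<forall>\<alpha>\<in>I. (\<lambda>n. c * \<alpha> n) \<in> I)
     \<and> (\<forall>\<alpha>\<in>I. \<forall>\<beta>\<in>null_seqs. (\<forall>n. star \<beta> n \<le> star \<alpha> n) \<longrightarrow> \<beta> \<in> I)"

definition calkin_hull :: "(nat \<Rightarrow> complex) set \<Rightarrow> (nat \<Rightarrow> complex) set" where
  "calkin_hull S = \<Inter> {J. calkin_space J \<and> S \<subseteq> J}"

definition stable_calkin :: "(nat \<Rightarrow> complex) set \<Rightarrow> bool" where
  "stable_calkin I \<longleftrightarrow> calkin_space I \<and>
     calkin_hull {tensor \<alpha> \<beta> | \<alpha> \<beta>. \<alpha> \<in> I \<and> \<beta> \<in> I} = I"

end

theory Submission
  imports Defs
begin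

text \<open>Write \<open>W(m) = w\<^sub>1 + \<dots> + w\<^sub>m\<close>. For a null sequence \<open>\<alpha>\<close> the \<open>p\<close>-th power of the
  Lorentz norm is the layer-cake integral \<open>\<integral>\<^sub>0\<^sup>\<infinity> W(#{i. t < |\<alpha> i|\<^sup>p}) dt\<close>: for every
  permutation the weighted sum is at most this integral, and arranging the terms in decreasing
  order attains it. The superlevel sets of \<open>\<alpha> \<otimes> \<beta>\<close> are the finite sets of pairs
  \<open>(i, j)\<close> with \<open>t < |\<alpha> i|\<^sup>p |\<beta> j|\<^sup>p\<close>. Give \<open>(i, j)\<close> the label \<open>(r i + 1)(s j + 1)\<close>, where
  \<open>r i\<close> and \<open>s j\<close> are the positions of \<open>i\<close> and \<open>j\<close> in the decreasing arrangements of
  \<open>|\<alpha>|\<close> and \<open>|\<beta>|\<close>. No label exceeds the position of its pair when a superlevel set is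
  sorted by label, so \<open>W\<close> of the size of the set is at most the sum of \<open>w\<close> at the labels,
  and by submultiplicativity at most \<open>C\<close> times the sum of \<open>w (r i + 1) w (s j + 1)\<close>.
  Integrating in \<open>t\<close> gives \<open>C \<parallel>\<alpha>\<parallel>\<^sup>p \<parallel>\<beta>\<parallel>\<^sup>p\<close>. Stability holds because \<open>\<alpha> \<otimes> e\<^sub>1\<close> has the same
  decreasing rearrangement as \<open>\<alpha>\<close>.\<close>

section \<open>Weights\<close>

definition weight_sum :: "(nat \<Rightarrow> real) \<Rightarrow> nat \<Rightarrow> real" where
  "weight_sum w m = (\<Sum>n<m. w (Suc n))"

locale antitone_weight =
  fixes w :: "nat \<Rightarrow> real"
  assumes weight_pos: "\<And>n. 1 \<le> n \<Longrightarrow> 0 < w n"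
    and weight_Suc_le: "\<And>n. 1 \<le> n \<Longrightarrow> w (Suc n) \<le> w n"
begin

lemma weight_antimono:
  assumes "1 \<le> a" "a \<le> b"
  shows "w b \<le> w a"
  using assms(2)
proof (induction b rule: dec_induct)
  case (step n)
  then show ?case using weight_Suc_le[of n] assms(1) by linarith
qed simp

lemma weight_nonneg: "0 \<le> w (Suc n)"
  using weight_pos[of "Suc n"] by simp

lemma weight_sum_mono: "m \<le> m' \<Longrightarrow> weight_sum w m \<le> weight_sum w m'"
  unfolding weight_sum_def by (rule sum_mono2) (auto intro: weight_nonneg)

lemma sum_weight_le_weight_sum:
  "finite T \<Longrightarrow> (\<Sum>n\<in>T. w (Suc n)) \<le> weight_sum w (card T)"
proof (induction "card T" arbitrary: T)
  case 0
  then show ?case by (simp add: weight_sum_def)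
next
  case (Suc k)
  define m where "m = Max T"
  have m: "m \<in> T" "\<And>n. n \<in> T \<Longrightarrow> n \<le> m"
    using Suc m_def by (auto intro: Max_in)
  have "card T \<le> card {..m}"
    using m by (intro card_mono) auto
  then have "w (Suc m) \<le> w (Suc k)"
    using Suc(2) by (intro weight_antimono) auto
  moreover have "k = card (T - {m})"
    using Suc m by simp
  then have "(\<Sum>n\<in>T-{m}. w (Suc n)) \<le> weight_sum w k"
    using Suc by simp
  ultimately have "(\<Sum>n\<in>T-{m}. w (Suc n)) + w (Suc m) \<le> weight_sum w (Suc k)"
    by (simp add: weight_sum_def)
  then show ?case
    using Suc m by (simp add: sum_diff1)
qed

text \<open>The hypothesis says that \<open>\<kappa> d\<close> never exceeds the position of \<open>d\<close> in an
  enumeration of \<open>D\<close> by increasing label.\<close>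

lemma weight_sum_le_sum_weight_label:
  assumes "finite D" "\<And>d. d \<in> D \<Longrightarrow> 1 \<le> \<kappa> d"
    and "\<And>d. d \<in> D \<Longrightarrow> \<kappa> d \<le> card {e\<in>D. \<kappa> e < \<kappa> d} + 1"
  shows "weight_sum w (card D) \<le> (\<Sum>d\<in>D. w (\<kappa> d))"
  using assms
proof (induction "card D" arbitrary: D)
  case 0
  then show ?case by (simp add: weight_sum_def)
next
  case (Suc k)
  obtain d0 where d0: "d0 \<in> D" "\<kappa> d0 = Max (\<kappa> ` D)"
    using Suc Max_in[of "\<kappa> ` D"] by fastforce
  then have d0_max: "\<And>e. e \<in> D \<Longrightarrow> \<kappa> e \<le> \<kappa> d0"
    using Suc by simp
  have "card {e\<in>D. \<kappa> e < \<kappa> d0} \<le> card (D - {d0})"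
    using Suc by (intro card_mono) auto
  then have "\<kappa> d0 \<le> Suc k"
    using Suc(2,3,5) d0 by fastforce
  then have "w (Suc k) \<le> w (\<kappa> d0)"
    using Suc(4)[OF d0(1)] by (intro weight_antimono)
  moreover have "weight_sum w (card (D - {d0})) \<le> (\<Sum>d\<in>D-{d0}. w (\<kappa> d))"
  proof (rule Suc(1))
    fix d assume d: "d \<in> D - {d0}"
    have "{e\<in>D - {d0}. \<kappa> e < \<kappa> d} = {e\<in>D. \<kappa> e < \<kappa> d}"
      using d0_max d by fastforce
    then show "\<kappa> d \<le> card {e\<in>D - {d0}. \<kappa> e < \<kappa> d} + 1"
      using Suc(5)[of d] d by simp
  qed (use Suc d0 in auto)
  moreover have "card (D - {d0}) = k"
    using Suc d0 by simp
  moreover have "weight_sum w (Suc k) = weight_sum w k + w (Suc k)"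
    by (simp add: weight_sum_def)
  ultimately have "weight_sum w (Suc k) \<le> (\<Sum>d\<in>D-{d0}. w (\<kappa> d)) + w (\<kappa> d0)"
    by simp
  then show ?case
    using Suc d0 by (simp add: sum_diff1)
qed

end

section \<open>Null families and their decreasing rearrangement\<close>

definition null_family :: "('i \<Rightarrow> real) \<Rightarrow> bool" where
  "null_family g \<longleftrightarrow> (\<forall>i. 0 \<le> g i) \<and> (\<forall>t>0. finite {i. t < g i})"

lemma null_family_nonneg: "null_family g \<Longrightarrow> 0 \<le> g i"
  unfolding null_family_def by simp

lemma null_family_finite_superlevel: "null_family g \<Longrightarrow> 0 < t \<Longrightarrow> finite {i. t < g i}"
  unfolding null_family_def by simp

lemma null_family_bounded:
  assumes "null_family g"
  obtains M where "0 < M" "\<And>i. g i \<le> M"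
proof
  define M where "M = Max (insert 1 (g ` {i. 1 < g i}))"
  have fin: "finite {i. 1 < g i}"
    using assms by (simp add: null_family_finite_superlevel)
  then have "1 \<le> M"
    unfolding M_def by (intro Max_ge) auto
  then show "0 < M"
    by simp
  show "g i \<le> M" for i
  proof (cases "1 < g i")
    case True
    then show ?thesis
      using fin unfolding M_def by (intro Max_ge) auto
  qed (use \<open>1 \<le> M\<close> in simp)
qed

lemma decr_rearr_set_nonempty:
  assumes "null_family g"
  shows "{t. 0 \<le> t \<and> finite {i. t < g i} \<and> card {i. t < g i} \<le> n} \<noteq> {}"
proof -
  obtain M where "0 < M" "\<And>i. g i \<le> M"
    using null_family_bounded[OF assms] by blast
  then have "{i. M < g i} = {}"
    by (simp add: not_less)
  with \<open>0 < M\<close> have "M \<in> {t. 0 \<le> t \<and> finite {i. t < g i} \<and> card {i. t < g i} \<le> n}"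
    by simp
  then show ?thesis
    by blast
qed

lemma decr_rearr_nonneg: "null_family g \<Longrightarrow> 0 \<le> decr_rearr g n"
  unfolding decr_rearr_def by (rule cInf_greatest[OF decr_rearr_set_nonempty]) auto

lemma decr_rearr_le:
  assumes "0 \<le> t" "finite {i. t < g i}" "card {i. t < g i} \<le> n"
  shows "decr_rearr g n \<le> t"
  unfolding decr_rearr_def using assms by (intro cInf_lower bdd_belowI[of _ 0]) auto

lemma le_decr_rearr:
  assumes g: "null_family g" and n: "n < card {i. m \<le> g i}"
  shows "m \<le> decr_rearr g n"
  unfolding decr_rearr_def
proof (rule cInf_greatest[OF decr_rearr_set_nonempty[OF g]])
  fix s assume s: "s \<in> {t. 0 \<le> t \<and> finite {i. t < g i} \<and> card {i. t < g i} \<le> n}"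
  show "m \<le> s"
  proof (rule ccontr)
    assume "\<not> m \<le> s"
    then have "card {i. m \<le> g i} \<le> card {i. s < g i}"
      using s by (intro card_mono) auto
    with s n show False
      by simp
  qed
qed

lemma less_decr_rearr_iff:
  fixes g :: "'i \<Rightarrow> real"
  assumes g: "null_family g" and t: "0 < t"
  shows "t < decr_rearr g n \<longleftrightarrow> n < card {i. t < g i}"
proof
  assume "t < decr_rearr g n"
  then show "n < card {i. t < g i}"
    using decr_rearr_le[of t g n] t null_family_finite_superlevel[OF g t] by linarith
next
  let ?S = "{i. t < g i}"
  assume n: "n < card ?S"
  have fin: "finite ?S"
    using g t by (rule null_family_finite_superlevel)
  moreover have "?S \<noteq> {}"
    using n by (intro notI) simp
  ultimately have "Min (g ` ?S) \<in> g ` ?S"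
    by (intro Min_in) auto
  then have "t < Min (g ` ?S)"
    by auto
  moreover have "{i. Min (g ` ?S) \<le> g i} = ?S"
    using fin \<open>t < Min (g ` ?S)\<close> by (auto intro: Min_le)
  then have "Min (g ` ?S) \<le> decr_rearr g n"
    using n by (intro le_decr_rearr[OF g]) simp
  ultimately show "t < decr_rearr g n"
    by linarith
qed

lemma decr_rearr_superlevel:
  "null_family g \<Longrightarrow> 0 < t \<Longrightarrow> {n. t < decr_rearr g n} = {..< card {i. t < g i}}"
  using less_decr_rearr_iff by auto

lemma card_decr_rearr_superlevel:
  "null_family g \<Longrightarrow> 0 < t \<Longrightarrow> card {n. t < decr_rearr g n} = card {i. t < g i}"
  by (simp add: decr_rearr_superlevel)

lemma null_family_decr_rearr: "null_family g \<Longrightarrow> null_family (decr_rearr g)"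
  unfolding null_family_def[of "decr_rearr g"] using decr_rearr_nonneg decr_rearr_superlevel[of g] by auto

lemma decr_rearr_mono:
  fixes g :: "'i \<Rightarrow> real" and g' :: "'j \<Rightarrow> real"
  assumes g: "null_family g" and g': "null_family g'"
    and card_le: "\<And>t. 0 < t \<Longrightarrow> card {i. t < g i} \<le> card {j. t < g' j}"
  shows "decr_rearr g n \<le> decr_rearr g' n"
proof (rule ccontr)
  assume "\<not> ?thesis"
  then obtain t where t: "decr_rearr g' n < t" "t < decr_rearr g n"
    using dense not_le by blast
  moreover have "0 < t"
    using t decr_rearr_nonneg[OF g', of n] by linarith
  ultimately have "n < card {i. t < g i}"
    using less_decr_rearr_iff[OF g] by simp
  then have "n < card {j. t < g' j}"
    using card_le[OF \<open>0 < t\<close>] by simp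
  then have "t < decr_rearr g' n"
    using less_decr_rearr_iff[OF g' \<open>0 < t\<close>] by simp
  with t show False
    by simp
qed

lemma finite_superlevel_norm:
  fixes \<alpha> :: "nat \<Rightarrow> 'a::real_normed_vector"
  assumes "\<alpha> \<longlonglongrightarrow> 0" "0 < t"
  shows "finite {i. t < norm (\<alpha> i)}"
proof -
  obtain N where "\<forall>n\<ge>N. norm (\<alpha> n) < t"
    using assms unfolding LIMSEQ_iff by auto
  then have "{i. t < norm (\<alpha> i)} \<subseteq> {..<N}"
    by (auto simp: not_le[symmetric])
  then show ?thesis
    by (rule finite_subset) simp
qed

lemma less_powr_iff:
  fixes t x p :: real
  assumes "0 < t" "0 < p" "0 \<le> x"
  shows "t < x powr p \<longleftrightarrow> t powr (1/p) < x"
proof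
  assume "t < x powr p"
  then have "t powr (1/p) < (x powr p) powr (1/p)"
    using assms by (intro powr_less_mono2) auto
  then show "t powr (1/p) < x"
    using assms by (simp add: powr_powr)
next
  assume "t powr (1/p) < x"
  then have "(t powr (1/p)) powr p < x powr p"
    using assms by (intro powr_less_mono2) auto
  then show "t < x powr p"
    using assms by (simp add: powr_powr)
qed

lemma superlevel_norm_powr:
  fixes \<alpha> :: "'i \<Rightarrow> 'a::real_normed_vector"
  assumes "0 < t" "0 < p"
  shows "{i. t < norm (\<alpha> i) powr p} = {i. t powr (1/p) < norm (\<alpha> i)}"
  using less_powr_iff[OF assms] by auto

lemma null_family_norm_powr:
  fixes \<alpha> :: "nat \<Rightarrow> 'a::real_normed_vector"
  assumes "\<alpha> \<longlonglongrightarrow> 0" "0 < p"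
  shows "null_family (\<lambda>i. norm (\<alpha> i) powr p)"
  using assms unfolding null_family_def by (simp add: superlevel_norm_powr finite_superlevel_norm)

lemma null_family_norm:
  fixes \<alpha> :: "nat \<Rightarrow> 'a::real_normed_vector"
  shows "\<alpha> \<longlonglongrightarrow> 0 \<Longrightarrow> null_family (\<lambda>i. norm (\<alpha> i))"
  using null_family_norm_powr[of \<alpha> 1] by simp

section \<open>The layer-cake form of the Lorentz functional\<close>

definition layer_integral :: "(nat \<Rightarrow> real) \<Rightarrow> ('i \<Rightarrow> real) \<Rightarrow> ennreal" where
  "layer_integral w g =
     (\<integral>\<^sup>+t. indicator {0<..} t * ennreal (weight_sum w (card {i. t < g i})) \<partial>lborel)"

lemma ennreal_mult_emeasure_Ioo:
  fixes c y :: real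
  assumes "0 \<le> c"
  shows "ennreal (c * y) = ennreal c * emeasure lborel {0<..<y}"
proof (cases "0 \<le> y")
  case False
  then have "c * y \<le> 0"
    using assms by (simp add: mult_nonneg_nonpos)
  then show ?thesis
    using False by (simp add: ennreal_neg)
qed (use assms in \<open>simp add: ennreal_mult\<close>)

lemma suminf_eq_nn_integral_indicator:
  fixes c y :: "nat \<Rightarrow> real"
  assumes "\<And>n. 0 \<le> c n"
  shows "(\<Sum>n. ennreal (c n * y n)) = (\<integral>\<^sup>+t. (\<Sum>n. ennreal (c n) * indicator {0<..<y n} t) \<partial>lborel)"
proof -
  have "(\<integral>\<^sup>+t. (\<Sum>n. ennreal (c n) * indicator {0<..<y n} t) \<partial>lborel)
      = (\<Sum>n. \<integral>\<^sup>+t. ennreal (c n) * indicator {0<..<y n} t \<partial>lborel)"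
    by (rule nn_integral_suminf) measurable
  then show ?thesis
    using assms by (simp add: nn_integral_cmult_indicator ennreal_mult_emeasure_Ioo)
qed

lemma suminf_indicator_eq_sum:
  fixes c y :: "nat \<Rightarrow> real"
  assumes "finite {n. t < y n}" "0 < t" "\<And>n. 0 \<le> c n"
  shows "(\<Sum>n. ennreal (c n) * indicator {0<..<y n} t) = ennreal (\<Sum>n\<in>{n. t < y n}. c n)"
proof -
  have "(\<Sum>n. ennreal (c n) * indicator {0<..<y n} t)
      = (\<Sum>n\<in>{n. t < y n}. ennreal (c n) * indicator {0<..<y n} t)"
    using assms(1) by (rule suminf_finite) (simp add: indicator_def)
  also have "\<dots> = (\<Sum>n\<in>{n. t < y n}. ennreal (c n))"
    using assms(2) by (intro sum.cong) (auto simp: indicator_def)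
  finally show ?thesis
    using assms(3) by (simp add: sum_ennreal)
qed

definition decr_rank_set :: "(nat \<Rightarrow> real) \<Rightarrow> nat \<Rightarrow> nat set" where
  "decr_rank_set g i = {k. g i < g k} \<union> {k. k < i \<and> g k = g i}"

definition decr_rank :: "(nat \<Rightarrow> real) \<Rightarrow> nat \<Rightarrow> nat" where
  "decr_rank g i = card (decr_rank_set g i)"

lemma finite_decr_rank_set: "null_family g \<Longrightarrow> 0 < g i \<Longrightarrow> finite (decr_rank_set g i)"
  unfolding decr_rank_set_def by (simp add: null_family_finite_superlevel)

lemma decr_rank_set_le: "k \<in> decr_rank_set g i \<Longrightarrow> g i \<le> g k"
  unfolding decr_rank_set_def by auto

lemma not_in_decr_rank_set: "i \<notin> decr_rank_set g i"
  unfolding decr_rank_set_def by auto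

lemma decr_rank_less:
  assumes "null_family g" "0 < g i" "k \<in> decr_rank_set g i"
  shows "decr_rank g k < decr_rank g i"
proof -
  have "decr_rank_set g k \<subset> decr_rank_set g i"
    using assms(3) unfolding decr_rank_set_def by auto
  then show ?thesis
    unfolding decr_rank_def using finite_decr_rank_set[OF assms(1,2)] by (rule psubset_card_mono[rotated])
qed

lemma inj_on_decr_rank:
  assumes "null_family g"
  shows "inj_on (decr_rank g) {i. 0 < g i}"
proof (rule inj_onI, rule ccontr)
  fix i k assume "i \<in> {i. 0 < g i}" "k \<in> {i. 0 < g i}" "decr_rank g i = decr_rank g k" "i \<noteq> k"
  moreover have "k \<in> decr_rank_set g i \<or> i \<in> decr_rank_set g k"
    using \<open>i \<noteq> k\<close> unfolding decr_rank_set_def by (cases "g i = g k") auto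
  ultimately show False
    using decr_rank_less[OF assms] by fastforce
qed

lemma ex_bij_inverse_on_finite:
  fixes h :: "nat \<Rightarrow> nat"
  assumes "finite F" "inj_on h F"
  obtains \<pi> where "bij \<pi>" "\<And>i. i \<in> F \<Longrightarrow> \<pi> (h i) = i"
proof -
  define k where "k = from_nat_into (UNIV - h ` F) \<circ> inv_into UNIV (from_nat_into (UNIV - F))"
  have "bij_betw (from_nat_into (UNIV - F)) UNIV (UNIV - F)"
    and "bij_betw (from_nat_into (UNIV - h ` F)) UNIV (UNIV - h ` F)"
    using assms(1) by (auto intro!: bij_betw_from_nat_into simp: Diff_infinite_finite)
  then have "bij_betw k (UNIV - F) (UNIV - h ` F)"
    unfolding k_def by (rule bij_betw_trans[OF bij_betw_inv_into])
  moreover have "bij_betw h F (h ` F)"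
    using assms(2) by (simp add: bij_betw_imageI)
  ultimately have "bij_betw (\<lambda>x. if x \<in> F then h x else k x) (F \<union> (UNIV - F)) (h ` F \<union> (UNIV - h ` F))"
    by (intro bij_betw_disjoint_Un) auto
  then obtain \<sigma> where \<sigma>: "bij \<sigma>" "\<And>i. i \<in> F \<Longrightarrow> \<sigma> i = h i"
    by (simp add: Un_Diff_cancel)
  show ?thesis
  proof
    show "bij (inv \<sigma>)"
      using \<sigma>(1) by (rule bij_imp_bij_inv)
    show "inv \<sigma> (h i) = i" if "i \<in> F" for i
      using \<sigma> that by (metis bij_is_inj inv_f_f)
  qed
qed

context antitone_weight
begin

lemma suminf_weight_le_layer_integral:
  assumes g: "null_family g" and \<pi>: "bij \<pi>"
  shows "(\<Sum>n. ennreal (w (Suc n) * g (\<pi> n))) \<le> layer_integral w g"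
  unfolding suminf_eq_nn_integral_indicator[OF weight_nonneg] layer_integral_def
proof (rule nn_integral_mono)
  fix t :: real
  show "(\<Sum>n. ennreal (w (Suc n)) * indicator {0<..<g (\<pi> n)} t)
      \<le> indicator {0<..} t * ennreal (weight_sum w (card {i. t < g i}))"
  proof (cases "0 < t")
    case True
    have level: "{n. t < g (\<pi> n)} = \<pi> -` {i. t < g i}"
      by auto
    have fin: "finite {n. t < g (\<pi> n)}"
      unfolding level using null_family_finite_superlevel[OF g True] \<pi>
      by (intro finite_vimageI) (auto simp: bij_is_inj)
    have "card {n. t < g (\<pi> n)} = card {i. t < g i}"
      unfolding level using \<pi> by (intro card_vimage_inj) (auto simp: bij_def)
    then have "(\<Sum>n\<in>{n. t < g (\<pi> n)}. w (Suc n)) \<le> weight_sum w (card {i. t < g i})"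
      using sum_weight_le_weight_sum[OF fin] by simp
    then show ?thesis
      using True by (simp add: suminf_indicator_eq_sum[OF fin True] weight_nonneg ennreal_leI)
  qed (simp add: indicator_def)
qed

lemma layer_integral_le_suminf_decr_rank:
  assumes g: "null_family g"
  shows "layer_integral w g \<le> (\<Sum>i. ennreal (w (Suc (decr_rank g i)) * g i))"
  unfolding suminf_eq_nn_integral_indicator[OF weight_nonneg] layer_integral_def
proof (rule nn_integral_mono)
  fix t :: real
  show "indicator {0<..} t * ennreal (weight_sum w (card {i. t < g i}))
      \<le> (\<Sum>i. ennreal (w (Suc (decr_rank g i))) * indicator {0<..<g i} t)"
  proof (cases "0 < t")
    case True
    let ?S = "{i. t < g i}"
    have fin: "finite ?S"
      using g True by (rule null_family_finite_superlevel)
    have "weight_sum w (card ?S) \<le> (\<Sum>i\<in>?S. w (Suc (decr_rank g i)))"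
    proof (rule weight_sum_le_sum_weight_label[OF fin])
      fix i assume i: "i \<in> ?S"
      then have "decr_rank_set g i \<subseteq> {k\<in>?S. decr_rank g k < decr_rank g i}"
        using True decr_rank_less[OF g] decr_rank_set_le[of _ g i] by fastforce
      then have "card (decr_rank_set g i) \<le> card {k\<in>?S. decr_rank g k < decr_rank g i}"
        using fin by (intro card_mono) auto
      then show "Suc (decr_rank g i) \<le> card {k\<in>?S. Suc (decr_rank g k) < Suc (decr_rank g i)} + 1"
        by (simp add: decr_rank_def)
    qed simp
    then show ?thesis
      using True by (simp add: suminf_indicator_eq_sum[OF fin True] weight_nonneg ennreal_leI)
  qed simp
qed

text \<open>Every partial sum of the rank-weighted series is a finite sum of \<open>g\<close> in decreasing
  order, which a suitable permutation realises.\<close>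

lemma suminf_decr_rank_le_SUP:
  assumes g: "null_family g"
  shows "(\<Sum>i. ennreal (w (Suc (decr_rank g i)) * g i))
      \<le> (SUP \<pi>\<in>{\<pi>. bij \<pi>}. \<Sum>n. ennreal (w (Suc n) * g (\<pi> n)))"
proof -
  have "(\<Sum>i<N. ennreal (w (Suc (decr_rank g i)) * g i))
      \<le> (SUP \<pi>\<in>{\<pi>. bij \<pi>}. \<Sum>n. ennreal (w (Suc n) * g (\<pi> n)))" for N
  proof -
    define F where "F = {i. i < N \<and> 0 < g i}"
    have F: "finite F" "inj_on (decr_rank g) F"
      using inj_on_decr_rank[OF g] unfolding F_def by (auto intro: inj_on_subset)
    obtain \<pi> where \<pi>: "bij \<pi>" "\<And>i. i \<in> F \<Longrightarrow> \<pi> (decr_rank g i) = i"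
      using ex_bij_inverse_on_finite[OF F] by blast
    have zero: "g i = 0" if "i \<in> {..<N} - F" for i
      using null_family_nonneg[OF g, of i] that unfolding F_def by simp
    have "(\<Sum>i<N. ennreal (w (Suc (decr_rank g i)) * g i))
        = (\<Sum>i\<in>F. ennreal (w (Suc (decr_rank g i)) * g i))"
    proof (rule sum.mono_neutral_right)
      show "\<forall>i\<in>{..<N} - F. ennreal (w (Suc (decr_rank g i)) * g i) = 0"
        using zero by simp
    qed (auto simp: F_def)
    also have "\<dots> = (\<Sum>n\<in>decr_rank g ` F. ennreal (w (Suc n) * g (\<pi> n)))"
      using F \<pi> by (simp add: sum.reindex)
    also have "\<dots> \<le> (\<Sum>n. ennreal (w (Suc n) * g (\<pi> n)))"
      using F by (intro sum_le_suminf) auto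
    also have "\<dots> \<le> (SUP \<pi>\<in>{\<pi>. bij \<pi>}. \<Sum>n. ennreal (w (Suc n) * g (\<pi> n)))"
      using \<pi> by (intro SUP_upper) simp
    finally show ?thesis .
  qed
  then show ?thesis
    unfolding suminf_eq_SUP by (intro SUP_least)
qed

lemma lorentz_pow_eq_layer_integral:
  assumes "\<alpha> \<longlonglongrightarrow> 0" "0 < p"
  shows "lorentz_pow w p \<alpha> = layer_integral w (\<lambda>i. norm (\<alpha> i) powr p)"
proof (rule antisym)
  have null: "null_family (\<lambda>i. norm (\<alpha> i) powr p)"
    using assms by (rule null_family_norm_powr)
  show "lorentz_pow w p \<alpha> \<le> layer_integral w (\<lambda>i. norm (\<alpha> i) powr p)"
    unfolding lorentz_pow_def using null by (intro SUP_least suminf_weight_le_layer_integral) auto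
  show "layer_integral w (\<lambda>i. norm (\<alpha> i) powr p) \<le> lorentz_pow w p \<alpha>"
    unfolding lorentz_pow_def
    by (rule order_trans[OF layer_integral_le_suminf_decr_rank[OF null] suminf_decr_rank_le_SUP[OF null]])
qed

lemma suminf_decr_rank_le_lorentz_pow:
  assumes "\<alpha> \<longlonglongrightarrow> 0" "0 < p"
  shows "(\<Sum>i. ennreal (w (Suc (decr_rank (\<lambda>i. norm (\<alpha> i) powr p) i)) * norm (\<alpha> i) powr p))
      \<le> lorentz_pow w p \<alpha>"
  unfolding lorentz_pow_def using null_family_norm_powr[OF assms] by (rule suminf_decr_rank_le_SUP)

lemma layer_integral_mono:
  assumes "\<And>t. 0 < t \<Longrightarrow> card {i. t < g i} \<le> card {j. t < g' j}"
  shows "layer_integral w g \<le> layer_integral w g'"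
  unfolding layer_integral_def
proof (rule nn_integral_mono)
  fix t :: real
  show "indicator {0<..} t * ennreal (weight_sum w (card {i. t < g i}))
      \<le> indicator {0<..} t * ennreal (weight_sum w (card {j. t < g' j}))"
    using assms[of t] weight_sum_mono by (cases "0 < t") (auto intro: ennreal_leI)
qed

end

section \<open>The Lorentz space is a Calkin space\<close>

lemma norm_add_powr_le:
  fixes x y :: "'a::real_normed_vector"
  assumes "0 \<le> p"
  shows "norm (x + y) powr p \<le> 2 powr p * norm x powr p + 2 powr p * norm y powr p"
proof -
  have "norm (x + y) \<le> 2 * max (norm x) (norm y)"
    using norm_triangle_ineq[of x y] by linarith
  then have "norm (x + y) powr p \<le> (2 * max (norm x) (norm y)) powr p"
    using assms by (intro powr_mono2) auto
  also have "\<dots> = 2 powr p * max (norm x) (norm y) powr p"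
    by (simp add: powr_mult)
  also have "\<dots> \<le> 2 powr p * norm x powr p + 2 powr p * norm y powr p"
    by (cases "norm x \<le> norm y") (auto simp: max_def)
  finally show ?thesis .
qed

context antitone_weight
begin

lemma lorentz_pow_le_of_pointwise:
  assumes le: "\<And>n. norm (\<gamma> n) powr p \<le> a * norm (\<alpha> n) powr p + b * norm (\<beta> n) powr p"
    and "0 \<le> a" "0 \<le> b"
  shows "lorentz_pow w p \<gamma> \<le> ennreal a * lorentz_pow w p \<alpha> + ennreal b * lorentz_pow w p \<beta>"
  unfolding lorentz_pow_def[of w p \<gamma>]
proof (rule SUP_least)
  fix \<pi> :: "nat \<Rightarrow> nat" assume \<pi>: "\<pi> \<in> {\<pi>. bij \<pi>}"
  let ?A = "\<lambda>n. w (Suc n) * norm (\<alpha> (\<pi> n)) powr p" and ?B = "\<lambda>n. w (Suc n) * norm (\<beta> (\<pi> n)) powr p"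
  have "ennreal (w (Suc n) * norm (\<gamma> (\<pi> n)) powr p) \<le> ennreal a * ennreal (?A n) + ennreal b * ennreal (?B n)"
    for n
  proof -
    have "w (Suc n) * norm (\<gamma> (\<pi> n)) powr p \<le> a * ?A n + b * ?B n"
      using mult_left_mono[OF le weight_nonneg] by (simp add: algebra_simps)
    then have "ennreal (w (Suc n) * norm (\<gamma> (\<pi> n)) powr p) \<le> ennreal (a * ?A n + b * ?B n)"
      by (rule ennreal_leI)
    also have "\<dots> = ennreal a * ennreal (?A n) + ennreal b * ennreal (?B n)"
      using assms(2,3) weight_nonneg[of n] by (simp add: ennreal_plus ennreal_mult)
    finally show ?thesis .
  qed
  then have "(\<Sum>n. ennreal (w (Suc n) * norm (\<gamma> (\<pi> n)) powr p))
      \<le> (\<Sum>n. ennreal a * ennreal (?A n) + ennreal b * ennreal (?B n))"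
    by (intro suminf_le) auto
  also have "\<dots> = ennreal a * (\<Sum>n. ennreal (?A n)) + ennreal b * (\<Sum>n. ennreal (?B n))"
    by (simp add: suminf_add[symmetric] ennreal_suminf_cmult)
  also have "\<dots> \<le> ennreal a * lorentz_pow w p \<alpha> + ennreal b * lorentz_pow w p \<beta>"
    unfolding lorentz_pow_def using \<pi> by (intro add_mono mult_left_mono SUP_upper) auto
  finally show "(\<Sum>n. ennreal (w (Suc n) * norm (\<gamma> (\<pi> n)) powr p)) \<le> \<dots>" .
qed

lemma lorentz_space_add:
  assumes "0 \<le> p" "\<alpha> \<in> lorentz_space w p" "\<beta> \<in> lorentz_space w p"
  shows "(\<lambda>n. \<alpha> n + \<beta> n) \<in> lorentz_space w p"
proof -
  have "lorentz_pow w p (\<lambda>n. \<alpha> n + \<beta> n)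
      \<le> ennreal (2 powr p) * lorentz_pow w p \<alpha> + ennreal (2 powr p) * lorentz_pow w p \<beta>"
    using assms(1) by (intro lorentz_pow_le_of_pointwise norm_add_powr_le) auto
  also have "\<dots> < \<infinity>"
    using assms(2,3) unfolding lorentz_space_def by (simp add: ennreal_add_less_top ennreal_mult_less_top)
  finally show ?thesis
    unfolding lorentz_space_def by simp
qed

lemma lorentz_space_mult:
  assumes "\<alpha> \<in> lorentz_space w p"
  shows "(\<lambda>n. c * \<alpha> n) \<in> lorentz_space w p"
proof -
  have "lorentz_pow w p (\<lambda>n. c * \<alpha> n) \<le> ennreal (norm c powr p) * lorentz_pow w p \<alpha> + ennreal 0 * lorentz_pow w p \<alpha>"
    by (intro lorentz_pow_le_of_pointwise) (auto simp: norm_mult powr_mult)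
  also have "\<dots> < \<infinity>"
    using assms unfolding lorentz_space_def by (simp add: ennreal_mult_less_top)
  finally show ?thesis
    unfolding lorentz_space_def by simp
qed

lemma lorentz_space_zero: "(\<lambda>n. 0) \<in> lorentz_space w p"
proof -
  have "lorentz_pow w p (\<lambda>n. 0) = 0"
    unfolding lorentz_pow_def by (intro antisym SUP_least) auto
  then show ?thesis
    unfolding lorentz_space_def by simp
qed

lemma weight_sum_le_lorentz_pow:
  assumes E: "infinite {i. \<epsilon> \<le> norm (\<alpha> i)}" and "0 \<le> \<epsilon>" "0 \<le> p"
  shows "ennreal (\<epsilon> powr p * weight_sum w N) \<le> lorentz_pow w p \<alpha>"
proof -
  obtain B where B: "finite B" "card B = N" "B \<subseteq> {i. \<epsilon> \<le> norm (\<alpha> i)}"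
    using infinite_arbitrarily_large[OF E] by blast
  obtain h where h: "bij_betw h B {..<N}"
    using ex_bij_betw_finite_nat[OF B(1)] unfolding B(2) atLeast0LessThan by blast
  obtain \<pi> where \<pi>: "bij \<pi>" "\<And>i. i \<in> B \<Longrightarrow> \<pi> (h i) = i"
    using ex_bij_inverse_on_finite[OF B(1) bij_betw_imp_inj_on[OF h]] by blast
  have "\<pi> n \<in> B" if "n < N" for n
  proof -
    have "n \<in> h ` B"
      using h that by (simp add: bij_betw_def)
    then obtain b where "b \<in> B" "n = h b"
      by blast
    then show ?thesis
      using \<pi>(2) by simp
  qed
  then have "\<epsilon> powr p \<le> norm (\<alpha> (\<pi> n)) powr p" if "n < N" for n
    using B(3) that assms(2,3) by (intro powr_mono2) auto
  then have "w (Suc n) * \<epsilon> powr p \<le> w (Suc n) * norm (\<alpha> (\<pi> n)) powr p" if "n < N" for n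
    using that weight_nonneg by (intro mult_left_mono) auto
  then have "\<epsilon> powr p * weight_sum w N \<le> (\<Sum>n<N. w (Suc n) * norm (\<alpha> (\<pi> n)) powr p)"
    unfolding weight_sum_def sum_distrib_left by (auto intro: sum_mono simp: mult.commute)
  then have "ennreal (\<epsilon> powr p * weight_sum w N) \<le> (\<Sum>n<N. ennreal (w (Suc n) * norm (\<alpha> (\<pi> n)) powr p))"
    by (simp add: sum_ennreal weight_nonneg ennreal_leI)
  also have "\<dots> \<le> (\<Sum>n. ennreal (w (Suc n) * norm (\<alpha> (\<pi> n)) powr p))"
    by (rule sum_le_suminf) auto
  also have "\<dots> \<le> lorentz_pow w p \<alpha>"
    unfolding lorentz_pow_def using \<pi> by (intro SUP_upper) simp
  finally show ?thesis .
qed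

lemma lorentz_pow_mono_star:
  assumes \<alpha>: "\<alpha> \<longlonglongrightarrow> 0" and \<beta>: "\<beta> \<longlonglongrightarrow> 0" and p: "0 < p"
    and star_le: "\<And>n. star \<beta> n \<le> star \<alpha> n"
  shows "lorentz_pow w p \<beta> \<le> lorentz_pow w p \<alpha>"
  unfolding lorentz_pow_eq_layer_integral[OF \<alpha> p] lorentz_pow_eq_layer_integral[OF \<beta> p]
proof (rule layer_integral_mono)
  fix t :: real assume t: "0 < t"
  define s where "s = t powr (1/p)"
  have s: "0 < s"
    unfolding s_def using t by simp
  have "{n. s < star \<beta> n} \<subseteq> {n. s < star \<alpha> n}"
    using star_le by (auto intro: less_le_trans)
  then have "card {n. s < star \<beta> n} \<le> card {n. s < star \<alpha> n}"
    unfolding star_def using decr_rearr_superlevel[OF null_family_norm[OF \<alpha>] s] by (intro card_mono) auto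
  then show "card {i. t < norm (\<beta> i) powr p} \<le> card {i. t < norm (\<alpha> i) powr p}"
    unfolding superlevel_norm_powr[OF t p] s_def[symmetric] star_def
    by (simp add: card_decr_rearr_superlevel[OF null_family_norm s] \<alpha> \<beta>)
qed

end

locale divergent_weight = antitone_weight +
  assumes weight_not_summable: "\<not> summable (\<lambda>n. w (Suc n))"
begin

lemma lorentz_space_LIMSEQ_zero:
  assumes "\<alpha> \<in> lorentz_space w p" "0 < p"
  shows "\<alpha> \<longlonglongrightarrow> 0"
proof (rule ccontr)
  assume "\<not> \<alpha> \<longlonglongrightarrow> 0"
  then obtain \<epsilon> where \<epsilon>: "0 < \<epsilon>" "\<And>N. \<exists>n\<ge>N. \<epsilon> \<le> norm (\<alpha> n)"
    unfolding LIMSEQ_iff by (auto simp: not_less)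
  then have E: "infinite {i. \<epsilon> \<le> norm (\<alpha> i)}"
    unfolding infinite_nat_iff_unbounded_le by auto
  obtain R where R: "lorentz_pow w p \<alpha> = ennreal R" "0 \<le> R"
    using assms(1) unfolding lorentz_space_def by (cases "lorentz_pow w p \<alpha>") auto
  have "summable (\<lambda>n. w (Suc n))"
  proof (rule summableI_nonneg_bounded)
    fix N
    have "ennreal (\<epsilon> powr p * weight_sum w N) \<le> lorentz_pow w p \<alpha>"
      by (rule weight_sum_le_lorentz_pow[OF E]) (use \<epsilon>(1) assms(2) in auto)
    then have "\<epsilon> powr p * weight_sum w N \<le> R"
      using R by (simp add: ennreal_le_iff)
    then show "(\<Sum>n<N. w (Suc n)) \<le> R / \<epsilon> powr p"
      using \<epsilon>(1) by (simp add: weight_sum_def field_simps)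
  qed (rule weight_nonneg)
  with weight_not_summable show False ..
qed

lemma calkin_space_lorentz_space:
  assumes p: "0 < p"
  shows "calkin_space (lorentz_space w p)"
  unfolding calkin_space_def
proof (intro conjI ballI allI impI)
  show "lorentz_space w p \<subseteq> null_seqs"
    unfolding null_seqs_def using lorentz_space_LIMSEQ_zero[OF _ p] by auto
  fix \<alpha> \<beta> assume \<alpha>: "\<alpha> \<in> lorentz_space w p"
  show "(\<lambda>n. \<alpha> n + \<beta> n) \<in> lorentz_space w p" if "\<beta> \<in> lorentz_space w p"
    using p \<alpha> that by (intro lorentz_space_add) auto
  assume "\<beta> \<in> null_seqs" "\<forall>n. star \<beta> n \<le> star \<alpha> n"
  then have "lorentz_pow w p \<beta> \<le> lorentz_pow w p \<alpha>"
    using lorentz_space_LIMSEQ_zero[OF \<alpha> p] p by (intro lorentz_pow_mono_star) (auto simp: null_seqs_def)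
  then show "\<beta> \<in> lorentz_space w p"
    using \<alpha> unfolding lorentz_space_def by (simp add: le_less_trans)
qed (simp_all add: lorentz_space_zero lorentz_space_mult)

end

section \<open>Tensor products\<close>

lemma null_family_prod:
  assumes A: "null_family A" and B: "null_family B"
  shows "null_family (\<lambda>(i, j). A i * B j)"
  unfolding null_family_def
proof (intro conjI allI impI)
  show "0 \<le> (case d of (i, j) \<Rightarrow> A i * B j)" for d
    using null_family_nonneg[OF A] null_family_nonneg[OF B] by (auto split: prod.splits)
  fix t :: real assume t: "0 < t"
  obtain MA where MA: "0 < MA" "\<And>i. A i \<le> MA"
    using null_family_bounded[OF A] by blast
  obtain MB where MB: "0 < MB" "\<And>j. B j \<le> MB"
    using null_family_bounded[OF B] by blast
  have "{d. t < (case d of (i, j) \<Rightarrow> A i * B j)} \<subseteq> {i. t / MB < A i} \<times> {j. t / MA < B j}"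
  proof clarsimp
    fix i j assume lt: "t < A i * B j"
    have "A i * B j \<le> A i * MB" "A i * B j \<le> MA * B j"
      using MA MB null_family_nonneg[OF A] null_family_nonneg[OF B] by (auto intro: mult_mono)
    then show "t / MB < A i \<and> t / MA < B j"
      using lt MA MB by (auto simp: pos_divide_less_eq mult.commute)
  qed
  moreover have "finite ({i. t / MB < A i} \<times> {j. t / MA < B j})"
    using t MA MB A B by (simp add: null_family_finite_superlevel)
  ultimately show "finite {d. t < (case d of (i, j) \<Rightarrow> A i * B j)}"
    by (rule finite_subset)
qed

lemma finite_prod_superlevel:
  assumes "null_family A" "null_family B" "0 < t"
  shows "finite {(i, j). t < A i * B j}"
proof -
  have "{(i, j). t < A i * B j} = {d. t < (case d of (i, j) \<Rightarrow> A i * B j)}"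
    by auto
  then show ?thesis
    using null_family_finite_superlevel[OF null_family_prod[OF assms(1,2)] assms(3)] by simp
qed

lemma ennreal_suminf_mult_suminf:
  assumes "\<And>i. 0 \<le> a i" "\<And>j. 0 \<le> b j"
  shows "(\<Sum>i. ennreal (a i)) * (\<Sum>j. ennreal (b j)) = (\<Sum>i. \<Sum>j. ennreal (a i * b j))"
  unfolding ennreal_suminf_multc[symmetric] ennreal_suminf_cmult[symmetric]
  using assms by (simp add: ennreal_mult)

lemma suminf_suminf_eq_nn_integral_indicator:
  fixes c y :: "nat \<Rightarrow> nat \<Rightarrow> real"
  assumes "\<And>i j. 0 \<le> c i j"
  shows "(\<Sum>i. \<Sum>j. ennreal (c i j * y i j))
       = (\<integral>\<^sup>+t. (\<Sum>i. \<Sum>j. ennreal (c i j) * indicator {0<..<y i j} t) \<partial>lborel)"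
proof -
  have "(\<Sum>i. \<Sum>j. ennreal (c i j * y i j))
      = (\<Sum>i. \<integral>\<^sup>+t. (\<Sum>j. ennreal (c i j) * indicator {0<..<y i j} t) \<partial>lborel)"
    using assms by (simp add: suminf_eq_nn_integral_indicator)
  also have "\<dots> = (\<integral>\<^sup>+t. (\<Sum>i. \<Sum>j. ennreal (c i j) * indicator {0<..<y i j} t) \<partial>lborel)"
    by (rule nn_integral_suminf[symmetric]) measurable
  finally show ?thesis .
qed

lemma suminf_suminf_indicator_eq_sum:
  fixes c y :: "nat \<Rightarrow> nat \<Rightarrow> real"
  assumes fin: "finite {(i, j). t < y i j}" and t: "0 < t" and c: "\<And>i j. 0 \<le> c i j"
  shows "(\<Sum>i. \<Sum>j. ennreal (c i j) * indicator {0<..<y i j} t)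
       = ennreal (\<Sum>(i, j)\<in>{(i, j). t < y i j}. c i j)"
proof -
  let ?D = "{(i, j). t < y i j}"
  have row: "{j. t < y i j} = Pair i -` ?D" for i
    by auto
  have fin_row: "finite {j. t < y i j}" for i
    unfolding row using fin by (rule finite_vimageI) (simp add: inj_on_def)
  have "(\<Sum>i. \<Sum>j. ennreal (c i j) * indicator {0<..<y i j} t)
      = (\<Sum>i. ennreal (\<Sum>j\<in>{j. t < y i j}. c i j))"
    using t c by (simp add: suminf_indicator_eq_sum[OF fin_row])
  also have "\<dots> = (\<Sum>i\<in>fst ` ?D. ennreal (\<Sum>j\<in>{j. t < y i j}. c i j))"
  proof (rule suminf_finite)
    fix i assume "i \<notin> fst ` ?D"
    then have "{j. t < y i j} = {}"
      by force
    then show "ennreal (\<Sum>j\<in>{j. t < y i j}. c i j) = 0"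
      by simp
  qed (use fin in simp)
  also have "\<dots> = ennreal (\<Sum>i\<in>fst ` ?D. \<Sum>j\<in>{j. t < y i j}. c i j)"
    using c by (intro sum_ennreal) (auto intro: sum_nonneg)
  also have "(\<Sum>i\<in>fst ` ?D. \<Sum>j\<in>{j. t < y i j}. c i j) = (\<Sum>(i, j)\<in>Sigma (fst ` ?D) (\<lambda>i. {j. t < y i j}). c i j)"
    using fin fin_row by (intro sum.Sigma) auto
  also have "Sigma (fst ` ?D) (\<lambda>i. {j. t < y i j}) = ?D"
    by force
  finally show ?thesis .
qed

lemma card_insert_decr_rank_set:
  "null_family g \<Longrightarrow> 0 < g i \<Longrightarrow> card (insert i (decr_rank_set g i)) = Suc (decr_rank g i)"
  by (simp add: finite_decr_rank_set not_in_decr_rank_set decr_rank_def)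

definition decr_rank_prod :: "(nat \<Rightarrow> real) \<Rightarrow> (nat \<Rightarrow> real) \<Rightarrow> nat \<times> nat \<Rightarrow> nat" where
  "decr_rank_prod A B = (\<lambda>(i, j). Suc (decr_rank A i) * Suc (decr_rank B j))"

lemma decr_rank_prod_less:
  assumes A: "null_family A" and B: "null_family B" and "0 < A i" "0 < B j"
    and k: "k = i \<or> k \<in> decr_rank_set A i" and l: "l = j \<or> l \<in> decr_rank_set B j"
    and "(k, l) \<noteq> (i, j)"
  shows "decr_rank_prod A B (k, l) < decr_rank_prod A B (i, j)"
proof -
  have rk: "decr_rank A k \<le> decr_rank A i" "decr_rank B l \<le> decr_rank B j"
    using k l decr_rank_less[OF A \<open>0 < A i\<close>] decr_rank_less[OF B \<open>0 < B j\<close>] by (auto intro: less_imp_le)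
  have "decr_rank A k < decr_rank A i \<or> decr_rank B l < decr_rank B j"
    using assms(5-7) decr_rank_less[OF A \<open>0 < A i\<close>] decr_rank_less[OF B \<open>0 < B j\<close>] by auto
  then have "Suc (decr_rank A k) * Suc (decr_rank B l) < Suc (decr_rank A i) * Suc (decr_rank B j)"
  proof
    assume "decr_rank A k < decr_rank A i"
    then show ?thesis
      using rk(2) by (intro mult_less_le_imp_less) auto
  next
    assume "decr_rank B l < decr_rank B j"
    then show ?thesis
      using rk(1) by (intro mult_le_less_imp_less) auto
  qed
  then show ?thesis
    by (simp add: decr_rank_prod_def)
qed

text \<open>The \<open>(r + 1)(s + 1) - 1\<close> pairs \<open>(k, l) \<noteq> (i, j)\<close> with \<open>k\<close> weakly ahead of \<open>i\<close> and \<open>l\<close>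
  weakly ahead of \<open>j\<close> all lie in the superlevel set and carry smaller labels.\<close>

lemma prod_decr_rank_le_card_less:
  fixes A B :: "nat \<Rightarrow> real"
  assumes A: "null_family A" and B: "null_family B" and t: "0 < t" and ij: "t < A i * B j"
  shows "decr_rank_prod A B (i, j)
    \<le> card {e \<in> {(k, l). t < A k * B l}. decr_rank_prod A B e < decr_rank_prod A B (i, j)} + 1"
proof -
  let ?\<kappa> = "decr_rank_prod A B"
  let ?D = "{(k, l). t < A k * B l}"
  have "0 < A i * B j"
    using ij t by linarith
  then have Ai: "0 < A i" and Bj: "0 < B j"
    using null_family_nonneg[OF A, of i] null_family_nonneg[OF B, of j] by (auto simp: zero_less_mult_iff)
  define P where "P = insert i (decr_rank_set A i) \<times> insert j (decr_rank_set B j) - {(i, j)}"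
  have "card (insert i (decr_rank_set A i) \<times> insert j (decr_rank_set B j)) = ?\<kappa> (i, j)"
    unfolding decr_rank_prod_def card_cartesian_product
    by (simp only: card_insert_decr_rank_set[OF A Ai] card_insert_decr_rank_set[OF B Bj] prod.case)
  then have "card P = ?\<kappa> (i, j) - 1"
    unfolding P_def using finite_decr_rank_set[OF A Ai] finite_decr_rank_set[OF B Bj]
    by (subst card_Diff_singleton) auto
  moreover have "P \<subseteq> {e \<in> ?D. ?\<kappa> e < ?\<kappa> (i, j)}"
  proof
    fix e assume "e \<in> P"
    then obtain k l where e: "e = (k, l)" "(k, l) \<noteq> (i, j)"
      and k: "k = i \<or> k \<in> decr_rank_set A i" and l: "l = j \<or> l \<in> decr_rank_set B j"
      unfolding P_def by auto
    have "A i * B j \<le> A k * B l"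
      using k l decr_rank_set_le null_family_nonneg[OF A] null_family_nonneg[OF B]
      by (intro mult_mono) auto
    moreover have "?\<kappa> (k, l) < ?\<kappa> (i, j)"
      using A B Ai Bj k l e(2) by (rule decr_rank_prod_less)
    ultimately show "e \<in> {e \<in> ?D. ?\<kappa> e < ?\<kappa> (i, j)}"
      using ij e by simp
  qed
  then have "card P \<le> card {e \<in> ?D. ?\<kappa> e < ?\<kappa> (i, j)}"
    using finite_prod_superlevel[OF A B t] by (intro card_mono) (auto intro: rev_finite_subset)
  ultimately show ?thesis
    by simp
qed

context antitone_weight
begin

lemma weight_sum_card_prod_superlevel_le:
  assumes A: "null_family A" and B: "null_family B" and t: "0 < t"
    and submult: "\<forall>m\<ge>1. \<forall>n\<ge>1. w (m * n) \<le> C * w m * w n"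
  shows "weight_sum w (card {(i, j). t < A i * B j})
    \<le> (\<Sum>(i, j)\<in>{(i, j). t < A i * B j}. C * w (Suc (decr_rank A i)) * w (Suc (decr_rank B j)))"
proof -
  let ?D = "{(i, j). t < A i * B j}"
  have "weight_sum w (card ?D) \<le> (\<Sum>d\<in>?D. w (decr_rank_prod A B d))"
  proof (rule weight_sum_le_sum_weight_label)
    fix d assume "d \<in> ?D"
    then obtain i j where "d = (i, j)" "t < A i * B j"
      by auto
    then show "decr_rank_prod A B d \<le> card {e \<in> ?D. decr_rank_prod A B e < decr_rank_prod A B d} + 1"
      using prod_decr_rank_le_card_less[OF A B t] by simp
  qed (use finite_prod_superlevel[OF A B t] in \<open>simp_all add: decr_rank_prod_def split: prod.splits\<close>)
  also have "\<dots> \<le> (\<Sum>(i, j)\<in>?D. C * w (Suc (decr_rank A i)) * w (Suc (decr_rank B j)))"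
  proof (rule sum_mono)
    fix d :: "nat \<times> nat"
    obtain i j where "d = (i, j)"
      by fastforce
    moreover have "w (Suc (decr_rank A i) * Suc (decr_rank B j)) \<le> C * w (Suc (decr_rank A i)) * w (Suc (decr_rank B j))"
      by (rule submult[rule_format]) simp_all
    ultimately show "w (decr_rank_prod A B d) \<le> (case d of (i, j) \<Rightarrow> C * w (Suc (decr_rank A i)) * w (Suc (decr_rank B j)))"
      by (simp add: decr_rank_prod_def)
  qed
  finally show ?thesis .
qed

lemma layer_integral_prod_le:
  assumes A: "null_family A" and B: "null_family B" and C: "0 \<le> C"
    and submult: "\<forall>m\<ge>1. \<forall>n\<ge>1. w (m * n) \<le> C * w m * w n"
  shows "layer_integral w (\<lambda>(i, j). A i * B j)
    \<le> ennreal C * (\<Sum>i. ennreal (w (Suc (decr_rank A i)) * A i))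
        * (\<Sum>j. ennreal (w (Suc (decr_rank B j)) * B j))"
proof -
  define c where "c i j = C * w (Suc (decr_rank A i)) * w (Suc (decr_rank B j))" for i j
  have c: "0 \<le> c i j" for i j
    unfolding c_def using C weight_nonneg by simp
  have "layer_integral w (\<lambda>(i, j). A i * B j)
      \<le> (\<integral>\<^sup>+t. (\<Sum>i. \<Sum>j. ennreal (c i j) * indicator {0<..<A i * B j} t) \<partial>lborel)"
    unfolding layer_integral_def
  proof (rule nn_integral_mono)
    fix t :: real
    let ?D = "{(i, j). t < A i * B j}"
    show "indicator {0<..} t * ennreal (weight_sum w (card {d. t < (case d of (i, j) \<Rightarrow> A i * B j)}))
        \<le> (\<Sum>i. \<Sum>j. ennreal (c i j) * indicator {0<..<A i * B j} t)"
    proof (cases "0 < t")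
      case True
      have D: "finite ?D"
        using A B True by (rule finite_prod_superlevel)
      have "weight_sum w (card ?D) \<le> (\<Sum>(i, j)\<in>?D. c i j)"
        unfolding c_def using A B True submult by (rule weight_sum_card_prod_superlevel_le)
      moreover have "{d. t < (case d of (i, j) \<Rightarrow> A i * B j)} = ?D"
        by auto
      ultimately show ?thesis
        using True by (simp add: suminf_suminf_indicator_eq_sum[OF D True c] ennreal_leI)
    qed simp
  qed
  also have "\<dots> = (\<Sum>i. \<Sum>j. ennreal (c i j * (A i * B j)))"
    by (rule suminf_suminf_eq_nn_integral_indicator[symmetric]) (rule c)
  also have "\<dots> = (\<Sum>i. ennreal (C * (w (Suc (decr_rank A i)) * A i))) * (\<Sum>j. ennreal (w (Suc (decr_rank B j)) * B j))"
    using C weight_nonneg null_family_nonneg[OF A] null_family_nonneg[OF B]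
    by (subst ennreal_suminf_mult_suminf) (auto simp: c_def ac_simps)
  also have "\<dots> = ennreal C * (\<Sum>i. ennreal (w (Suc (decr_rank A i)) * A i))
        * (\<Sum>j. ennreal (w (Suc (decr_rank B j)) * B j))"
    using C weight_nonneg null_family_nonneg[OF A] by (simp add: ennreal_mult ennreal_suminf_cmult)
  finally show ?thesis .
qed

end

definition tensor_family :: "(nat \<Rightarrow> complex) \<Rightarrow> (nat \<Rightarrow> complex) \<Rightarrow> nat \<times> nat \<Rightarrow> real" where
  "tensor_family \<alpha> \<beta> = (\<lambda>(i, j). norm (\<alpha> i) * norm (\<beta> j))"

lemma null_family_tensor_family:
  "\<alpha> \<longlonglongrightarrow> 0 \<Longrightarrow> \<beta> \<longlonglongrightarrow> 0 \<Longrightarrow> null_family (tensor_family \<alpha> \<beta>)"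
  unfolding tensor_family_def by (intro null_family_prod null_family_norm)

lemma norm_tensor:
  assumes "null_family (tensor_family \<alpha> \<beta>)"
  shows "norm (tensor \<alpha> \<beta> n) = decr_rearr (tensor_family \<alpha> \<beta>) n"
proof -
  have "0 \<le> decr_rearr (tensor_family \<alpha> \<beta>) n"
    using assms by (rule decr_rearr_nonneg)
  then show ?thesis
    unfolding tensor_def tensor_family_def by simp
qed

lemma null_family_norm_imp_LIMSEQ_zero:
  fixes \<gamma> :: "nat \<Rightarrow> 'a::real_normed_vector"
  assumes "null_family (\<lambda>n. norm (\<gamma> n))"
  shows "\<gamma> \<longlonglongrightarrow> 0"
proof (rule LIMSEQ_I)
  fix r :: real assume "0 < r"
  then obtain N where N: "{n. r / 2 < norm (\<gamma> n)} \<subseteq> {..<N}"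
    using null_family_finite_superlevel[OF assms, of "r / 2"] finite_nat_bounded by auto
  have "norm (\<gamma> n) < r" if "N \<le> n" for n
  proof -
    have "\<not> r / 2 < norm (\<gamma> n)"
      using N that by auto
    then show ?thesis
      using \<open>0 < r\<close> by linarith
  qed
  then show "\<exists>N. \<forall>n\<ge>N. norm (\<gamma> n - 0) < r"
    by auto
qed

lemma tensor_LIMSEQ_zero:
  assumes "\<alpha> \<longlonglongrightarrow> 0" "\<beta> \<longlonglongrightarrow> 0"
  shows "tensor \<alpha> \<beta> \<longlonglongrightarrow> 0"
proof (rule null_family_norm_imp_LIMSEQ_zero)
  have "null_family (tensor_family \<alpha> \<beta>)"
    using assms by (rule null_family_tensor_family)
  then show "null_family (\<lambda>n. norm (tensor \<alpha> \<beta> n))"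
    by (simp add: norm_tensor null_family_decr_rearr)
qed

lemma card_superlevel_tensor_powr:
  assumes \<alpha>: "\<alpha> \<longlonglongrightarrow> 0" and \<beta>: "\<beta> \<longlonglongrightarrow> 0" and t: "0 < t" and p: "0 < p"
  shows "card {n. t < norm (tensor \<alpha> \<beta> n) powr p}
       = card {(i, j). t < norm (\<alpha> i) powr p * norm (\<beta> j) powr p}"
proof -
  have null: "null_family (tensor_family \<alpha> \<beta>)"
    using \<alpha> \<beta> by (rule null_family_tensor_family)
  have "{n. t < norm (tensor \<alpha> \<beta> n) powr p} = {n. t powr (1/p) < decr_rearr (tensor_family \<alpha> \<beta>) n}"
    using less_powr_iff[OF t p decr_rearr_nonneg[OF null]] by (simp add: norm_tensor[OF null])
  moreover have "{d. t powr (1/p) < tensor_family \<alpha> \<beta> d}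
      = {(i, j). t < norm (\<alpha> i) powr p * norm (\<beta> j) powr p}"
    using less_powr_iff[OF t p] unfolding tensor_family_def by (auto simp: powr_mult[symmetric])
  ultimately show ?thesis
    using t by (simp add: card_decr_rearr_superlevel[OF null])
qed

context antitone_weight
begin

lemma lorentz_pow_tensor_le:
  assumes \<alpha>: "\<alpha> \<longlonglongrightarrow> 0" and \<beta>: "\<beta> \<longlonglongrightarrow> 0" and p: "0 < p" and C: "0 \<le> C"
    and submult: "\<forall>m\<ge>1. \<forall>n\<ge>1. w (m * n) \<le> C * w m * w n"
  shows "lorentz_pow w p (tensor \<alpha> \<beta>) \<le> ennreal C * lorentz_pow w p \<alpha> * lorentz_pow w p \<beta>"
proof -
  let ?A = "\<lambda>i. norm (\<alpha> i) powr p" and ?B = "\<lambda>j. norm (\<beta> j) powr p"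
  have "{d. t < (case d of (i, j) \<Rightarrow> ?A i * ?B j)} = {(i, j). t < ?A i * ?B j}" for t
    by auto
  then have "layer_integral w (\<lambda>n. norm (tensor \<alpha> \<beta> n) powr p) = layer_integral w (\<lambda>(i, j). ?A i * ?B j)"
    unfolding layer_integral_def
    by (intro nn_integral_cong) (simp add: card_superlevel_tensor_powr[OF \<alpha> \<beta> _ p] indicator_def)
  then have "lorentz_pow w p (tensor \<alpha> \<beta>) = layer_integral w (\<lambda>(i, j). ?A i * ?B j)"
    by (simp add: lorentz_pow_eq_layer_integral[OF tensor_LIMSEQ_zero[OF \<alpha> \<beta>] p])
  also have "\<dots> \<le> ennreal C * (\<Sum>i. ennreal (w (Suc (decr_rank ?A i)) * ?A i))
      * (\<Sum>j. ennreal (w (Suc (decr_rank ?B j)) * ?B j))"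
    using null_family_norm_powr[OF \<alpha> p] null_family_norm_powr[OF \<beta> p] C submult
    by (rule layer_integral_prod_le)
  also have "\<dots> \<le> ennreal C * lorentz_pow w p \<alpha> * lorentz_pow w p \<beta>"
    by (intro mult_mono suminf_decr_rank_le_lorentz_pow \<alpha> \<beta> p) auto
  finally show ?thesis .
qed

end

section \<open>Stability\<close>

definition unit_seq :: "nat \<Rightarrow> complex" where
  "unit_seq n = (if n = 0 then 1 else 0)"

lemma unit_seq_LIMSEQ_zero: "unit_seq \<longlonglongrightarrow> 0"
  unfolding unit_seq_def by (rule LIMSEQ_I) (auto intro: exI[of _ 1])

lemma star_le_star_tensor_unit_seq:
  assumes \<alpha>: "\<alpha> \<longlonglongrightarrow> 0"
  shows "star \<alpha> n \<le> star (tensor \<alpha> unit_seq) n"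
proof -
  have null: "null_family (tensor_family \<alpha> unit_seq)"
    using \<alpha> unit_seq_LIMSEQ_zero by (rule null_family_tensor_family)
  have "star (tensor \<alpha> unit_seq) = decr_rearr (decr_rearr (tensor_family \<alpha> unit_seq))"
    unfolding star_def norm_tensor[OF null] ..
  moreover have "decr_rearr (\<lambda>i. norm (\<alpha> i)) n \<le> decr_rearr (decr_rearr (tensor_family \<alpha> unit_seq)) n"
  proof (rule decr_rearr_mono[OF null_family_norm[OF \<alpha>] null_family_decr_rearr[OF null]])
    fix s :: real assume s: "0 < s"
    have "card {i. s < norm (\<alpha> i)} \<le> card {d. s < tensor_family \<alpha> unit_seq d}"
      using null_family_finite_superlevel[OF null s]
      by (intro card_inj_on_le[of "\<lambda>i. (i, 0)"]) (auto simp: inj_on_def tensor_family_def unit_seq_def)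
    then show "card {i. s < norm (\<alpha> i)} \<le> card {j. s < decr_rearr (tensor_family \<alpha> unit_seq) j}"
      by (simp add: card_decr_rearr_superlevel[OF null s])
  qed
  ultimately show ?thesis
    unfolding star_def by simp
qed

context antitone_weight
begin

lemma unit_seq_in_lorentz_space: "unit_seq \<in> lorentz_space w p"
proof -
  have "lorentz_pow w p unit_seq \<le> ennreal (w 1)"
    unfolding lorentz_pow_def
  proof (rule SUP_least)
    fix \<pi> :: "nat \<Rightarrow> nat" assume "\<pi> \<in> {\<pi>. bij \<pi>}"
    then have \<pi>: "bij \<pi>"
      by simp
    let ?k = "inv \<pi> 0"
    have "\<pi> n = 0 \<longleftrightarrow> n = ?k" for n
      using \<pi> by (metis bij_inv_eq_iff)
    then have "(\<Sum>n. ennreal (w (Suc n) * norm (unit_seq (\<pi> n)) powr p)) = ennreal (w (Suc ?k))"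
      by (subst suminf_finite[of "{?k}"]) (auto simp: unit_seq_def)
    also have "\<dots> \<le> ennreal (w 1)"
      by (intro ennreal_leI weight_antimono) auto
    finally show "(\<Sum>n. ennreal (w (Suc n) * norm (unit_seq (\<pi> n)) powr p)) \<le> ennreal (w 1)" .
  qed
  then show ?thesis
    unfolding lorentz_space_def by (simp add: le_less_trans)
qed

end

context divergent_weight
begin

lemma lorentz_space_tensor:
  assumes "\<alpha> \<in> lorentz_space w p" "\<beta> \<in> lorentz_space w p" "0 < p" "0 \<le> C"
    and "\<forall>m\<ge>1. \<forall>n\<ge>1. w (m * n) \<le> C * w m * w n"
  shows "tensor \<alpha> \<beta> \<in> lorentz_space w p"
proof -
  have "lorentz_pow w p (tensor \<alpha> \<beta>) \<le> ennreal C * lorentz_pow w p \<alpha> * lorentz_pow w p \<beta>"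
    using assms by (intro lorentz_pow_tensor_le lorentz_space_LIMSEQ_zero) auto
  then show ?thesis
    using assms(1,2) unfolding lorentz_space_def by (auto simp: ennreal_mult_less_top intro: le_less_trans)
qed

lemma lorentz_norm_tensor_le:
  assumes "\<alpha> \<in> lorentz_space w p" "\<beta> \<in> lorentz_space w p" "0 < p" "0 \<le> C"
    and "\<forall>m\<ge>1. \<forall>n\<ge>1. w (m * n) \<le> C * w m * w n"
  shows "lorentz_norm w p (tensor \<alpha> \<beta>) \<le> C powr (1 / p) * lorentz_norm w p \<alpha> * lorentz_norm w p \<beta>"
proof -
  define a where "a = enn2real (lorentz_pow w p \<alpha>)"
  define b where "b = enn2real (lorentz_pow w p \<beta>)"
  have "lorentz_pow w p \<alpha> = ennreal a" "lorentz_pow w p \<beta> = ennreal b"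
    using assms(1,2) unfolding a_def b_def lorentz_space_def by (simp_all add: ennreal_enn2real)
  moreover have "lorentz_pow w p (tensor \<alpha> \<beta>) \<le> ennreal C * lorentz_pow w p \<alpha> * lorentz_pow w p \<beta>"
    using assms by (intro lorentz_pow_tensor_le lorentz_space_LIMSEQ_zero) auto
  ultimately have "lorentz_pow w p (tensor \<alpha> \<beta>) \<le> ennreal (C * a * b)"
    using assms(4) by (simp add: a_def b_def ennreal_mult)
  then have "enn2real (lorentz_pow w p (tensor \<alpha> \<beta>)) \<le> C * a * b"
    using assms(4) by (intro enn2real_leI) (auto simp: a_def b_def)
  then have "lorentz_norm w p (tensor \<alpha> \<beta>) \<le> (C * a * b) powr (1 / p)"
    unfolding lorentz_norm_def using assms(3) by (intro powr_mono2) auto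
  also have "\<dots> = C powr (1 / p) * lorentz_norm w p \<alpha> * lorentz_norm w p \<beta>"
    using assms(4) by (simp add: a_def b_def lorentz_norm_def powr_mult)
  finally show ?thesis .
qed

lemma stable_calkin_lorentz_space:
  assumes p: "0 < p" and "0 \<le> C" "\<forall>m\<ge>1. \<forall>n\<ge>1. w (m * n) \<le> C * w m * w n"
  shows "stable_calkin (lorentz_space w p)"
  unfolding stable_calkin_def
proof (intro conjI equalityI)
  let ?L = "lorentz_space w p"
  let ?T = "{tensor \<alpha> \<beta> |\<alpha> \<beta>. \<alpha> \<in> ?L \<and> \<beta> \<in> ?L}"
  show calkin: "calkin_space ?L"
    using p by (rule calkin_space_lorentz_space)
  show "calkin_hull ?T \<subseteq> ?L"
    unfolding calkin_hull_def using calkin lorentz_space_tensor[OF _ _ assms] by (intro Inter_lower) auto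
  show "?L \<subseteq> calkin_hull ?T"
    unfolding calkin_hull_def
  proof (intro subsetI InterI)
    fix \<alpha> J assume \<alpha>: "\<alpha> \<in> ?L" and J: "J \<in> {J. calkin_space J \<and> ?T \<subseteq> J}"
    then have "tensor \<alpha> unit_seq \<in> J"
      using unit_seq_in_lorentz_space by blast
    moreover have "\<alpha> \<longlonglongrightarrow> 0"
      using \<alpha> p by (rule lorentz_space_LIMSEQ_zero)
    ultimately show "\<alpha> \<in> J"
      using J star_le_star_tensor_unit_seq unfolding calkin_space_def null_seqs_def by blast
  qed
qed

end

theorem theorem2p10:
  fixes w :: "nat \<Rightarrow> real" and C :: real
  assumes "weight_seq w"
    and "C > 0"
    and "\<forall>m\<ge>1. \<forall>n\<ge>1. w (m * n) \<le> C * w m * w n"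
  shows "\<forall>p::real. p \<ge> 1 \<longrightarrow>
           (\<forall>\<alpha>\<in>lorentz_space w p. \<forall>\<beta>\<in>lorentz_space w p.
              tensor \<alpha> \<beta> \<in> lorentz_space w p \<and>
              lorentz_norm w p (tensor \<alpha> \<beta>)
                \<le> C powr (1 / p) * lorentz_norm w p \<alpha> * lorentz_norm w p \<beta>)
           \<and> stable_calkin (lorentz_space w p)"
proof -
  interpret divergent_weight w
    using assms(1) unfolding weight_seq_def by unfold_locales auto
  have C: "0 \<le> C"
    using assms(2) by simp
  show ?thesis
    using lorentz_space_tensor[OF _ _ _ C assms(3)] lorentz_norm_tensor_le[OF _ _ _ C assms(3)]
      stable_calkin_lorentz_space[OF _ C assms(3)]
    by simp
qed

end
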